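(* (1) Every ideal of $C(X)_\mathcal{P}$ has depth zero if and only if $(X,\tau,\mathcal{P})$ is a $\mathcal{P}P$-space. (2) Every essential ideal of $C(X)_\mathcal{P}$ has depth zero if and only if $(X,\tau,\mathcal{P})$ is an almost $\mathcal{P}P$-space.
   Context: Let $(X,\tau)$ be a $T_1$ topological space and $\mathcal{P}$ an ideal of closed subsets of $X$ (a nonempty family of closed sets closed under finite unions and under taking closed subsets). For $f\colon X\to\mathbb{R}$, $D_f$ denotes the set of points of discontinuity of $f$, and $C(X)_\mathcal{P}=\{f\colon X\to\mathbb{R} : \overline{D_f}\in\mathcal{P}\}$, a commutative ring with unity under pointwise operations. For $f\in C(X)_\mathcal{P}$, $Z_\mathcal{P}(f)=\{x: f(x)=0\}$, $coz(f)=X\setminus Z_\mathcal{P}(f)$; $X_\mathcal{P}$ is $X$ with the topology having base $\{coz(f)\}$ and $int_{X_\mathcal{P}}$ its interior. $(X,\tau,\mathcal{P})$ is a $\mathcal{P}P$-space if $C(X)_\mathcal{P}$ is von Neumann regular, and an almost $\mathcal{P}P$-space if $Z_\mathcal{P}(f)\ne\emptyset$ implies $int_{X_\mathcal{P}}Z_\mathcal{P}(f)\neq\emptyset$ for $f\in C(X)_\mathcal{P}$. For an ideal $I$ regarded as a $C(X)_\mathcal{P}$-module $M$, an element $a$ is $M$-regular if $am\neq 0$ for all $m\in M\setminus\{0\}$; a sequence $a_1,\dots,a_n$ is $I$-regular if $a_1$ is $I$-regular, each $a_k$ is $I/(a_1I+\dots+a_{k-1}I)$-regular, and $a_1I+\dots+a_nI\neq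 I$; the depth of $I$ is the length of a maximal $I$-regular sequence. An ideal is essential if it intersects every nonzero ideal nontrivially. *)

theory Defs
  imports "HOL-Analysis.Analysis"
begin

text \<open>Real-valued functions on X are modelled as functions 'a => real that vanish
  outside topspace X (so that each function on X has a unique representative).\<close>

definition closed_ideal :: "'a topology \<Rightarrow> 'a set set \<Rightarrow> bool" where
  "closed_ideal X P \<longleftrightarrow> P \<noteq> {} \<and> (\<forall>A\<in>P. closedin X A)
     \<and> (\<forall>A\<in>P. \<forall>B\<in>P. A \<union> B \<in> P)
     \<and> (\<forall>A\<in>P. \<forall>B. closedin X B \<and> B \<subseteq> A \<longrightarrow> B \<in> P)"

definition discont :: "'a topology \<Rightarrow> ('a \<Rightarrow> real) \<Rightarrow> 'a set" where
  "discont X f = {x \<in> topspace X. \<not> limitin euclideanreal f (f x) (atin X x)}"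

definition CXP :: "'a topology \<Rightarrow> 'a set set \<Rightarrow> ('a \<Rightarrow> real) set" where
  "CXP X P = {f. (\<forall>x. x \<notin> topspace X \<longrightarrow> f x = 0) \<and> X closure_of (discont X f) \<in> P}"

definition ZP :: "'a topology \<Rightarrow> ('a \<Rightarrow> real) \<Rightarrow> 'a set" where
  "ZP X f = {x \<in> topspace X. f x = 0}"

definition coz :: "'a topology \<Rightarrow> ('a \<Rightarrow> real) \<Rightarrow> 'a set" where
  "coz X f = topspace X - ZP X f"

definition XP :: "'a topology \<Rightarrow> 'a set set \<Rightarrow> 'a topology" where
  "XP X P = topology_generated_by {coz X f | f. f \<in> CXP X P}"

definition ring_ideal :: "('a \<Rightarrow> real) set \<Rightarrow> ('a \<Rightarrow> real) set \<Rightarrow> bool" where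
  "ring_ideal R I \<longleftrightarrow> I \<subseteq> R \<and> (\<lambda>x. 0) \<in> I
     \<and> (\<forall>f\<in>I. \<forall>g\<in>I. (\<lambda>x. f x + g x) \<in> I)
     \<and> (\<forall>f\<in>I. (\<lambda>x. - f x) \<in> I)
     \<and> (\<forall>r\<in>R. \<forall>f\<in>I. (\<lambda>x. r x * f x) \<in> I)"

definition essential_ideal :: "('a \<Rightarrow> real) set \<Rightarrow> ('a \<Rightarrow> real) set \<Rightarrow> bool" where
  "essential_ideal R I \<longleftrightarrow> ring_ideal R I \<and>
     (\<forall>J. ring_ideal R J \<and> J \<noteq> {\<lambda>x. 0} \<longrightarrow> I \<inter> J \<noteq> {\<lambda>x. 0})"

definition seq_submod :: "('a \<Rightarrow> real) set \<Rightarrow> ('a \<Rightarrow> real) list \<Rightarrow> ('a \<Rightarrow> real) set" where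
  "seq_submod I as = {(\<lambda>x. \<Sum>i<length as. (as ! i) x * (ms ! i) x) | ms.
      length ms = length as \<and> set ms \<subseteq> I}"

definition module_regular :: "('a \<Rightarrow> real) set \<Rightarrow> ('a \<Rightarrow> real) set \<Rightarrow> ('a \<Rightarrow> real) \<Rightarrow> bool" where
  "module_regular I N a \<longleftrightarrow> (\<forall>m\<in>I. m \<notin> N \<longrightarrow> (\<lambda>x. a x * m x) \<notin> N)"

definition regular_seq :: "('a \<Rightarrow> real) set \<Rightarrow> ('a \<Rightarrow> real) set \<Rightarrow> ('a \<Rightarrow> real) list \<Rightarrow> bool" where
  "regular_seq R I as \<longleftrightarrow> set as \<subseteq> R
     \<and> (\<forall>k<length as. module_regular I (seq_submod I (take k as)) (as ! k))
     \<and> seq_submod I as \<noteq> I"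

text \<open>Depth zero: a maximal I-regular sequence has length 0, i.e. no nonempty I-regular sequence.\<close>
definition depth_zero :: "('a \<Rightarrow> real) set \<Rightarrow> ('a \<Rightarrow> real) set \<Rightarrow> bool" where
  "depth_zero R I \<longleftrightarrow> (\<forall>as. regular_seq R I as \<longrightarrow> as = [])"

definition PP_space :: "'a topology \<Rightarrow> 'a set set \<Rightarrow> bool" where
  "PP_space X P \<longleftrightarrow> (\<forall>f\<in>CXP X P. \<exists>g\<in>CXP X P. \<forall>x. f x = f x * g x * f x)"

definition almost_PP_space :: "'a topology \<Rightarrow> 'a set set \<Rightarrow> bool" where
  "almost_PP_space X P \<longleftrightarrow> (\<forall>f\<in>CXP X P. ZP X f \<noteq> {} \<longrightarrow> (XP X P) interior_of (ZP X f) \<noteq> {})"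

end

theory Submission
  imports Defs
begin

text \<open>An ideal has depth zero iff every I-regular element a satisfies aI = I, since a
  one-element sequence [a] is I-regular exactly when a is I-regular and aI \<noteq> I.
  If C(X)_P is von Neumann regular, a = a g a, and a(m - agm) = 0 forces m = a(gm).
  Conversely, f is regular on the principal ideal fC(X)_P, so f = f n with n = r f gives
  f = f r f. For part (2): in an almost PP-space an element regular on an essential ideal I
  has no zeros, for otherwise a nonempty cozero set h inside int Z(a) yields a nonzero
  element of I \<inter> hC(X)_P annihilated by a; so a is a unit. Conversely, if Z(f) \<noteq> {} has
  empty interior in X_P, f is regular on the (essential) whole ring, but f is no unit.\<close>

lemma ring_ideal_subset: "ring_ideal R I \<Longrightarrow> I \<subseteq> R"
  unfolding ring_ideal_def by (elim conjE)

lemma ring_ideal_zero: "ring_ideal R I \<Longrightarrow> (\<lambda>x. 0) \<in> I"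
  unfolding ring_ideal_def by (elim conjE)

lemma ring_ideal_add: "ring_ideal R I \<Longrightarrow> f \<in> I \<Longrightarrow> g \<in> I \<Longrightarrow> (\<lambda>x. f x + g x) \<in> I"
  unfolding ring_ideal_def by (elim conjE) (drule bspec, assumption, drule bspec, assumption)

lemma ring_ideal_uminus: "ring_ideal R I \<Longrightarrow> f \<in> I \<Longrightarrow> (\<lambda>x. - f x) \<in> I"
  unfolding ring_ideal_def by (elim conjE) (drule bspec, assumption)

lemma ring_ideal_mult: "ring_ideal R I \<Longrightarrow> r \<in> R \<Longrightarrow> f \<in> I \<Longrightarrow> (\<lambda>x. r x * f x) \<in> I"
  unfolding ring_ideal_def by (elim conjE) (drule bspec, assumption, drule bspec, assumption)

lemma ring_ideal_sum:
  fixes n :: nat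
  assumes I: "ring_ideal R I"
  shows "\<forall>i<n. g i \<in> I \<Longrightarrow> (\<lambda>x. \<Sum>i<n. g i x) \<in> I"
proof (induction n)
  case 0 then show ?case using ring_ideal_zero[OF I] by simp
next
  case (Suc n)
  then have "(\<lambda>x. (\<Sum>i<n. g i x) + g n x) \<in> I"
    using ring_ideal_add[OF I] by simp
  then show ?case by simp
qed

lemma essential_ideal_meets:
  assumes I: "essential_ideal R I" and J: "ring_ideal R J" and j: "j \<in> J" "j \<noteq> (\<lambda>x. 0)"
  obtains k where "k \<in> I" "k \<in> J" "k \<noteq> (\<lambda>x. 0)"
proof -
  have "J \<noteq> {\<lambda>x. 0}" using j by blast
  with I J have "I \<inter> J \<noteq> {\<lambda>x. 0}" unfolding essential_ideal_def by blast
  moreover have "(\<lambda>x. 0) \<in> I" using I ring_ideal_zero unfolding essential_ideal_def by blast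
  moreover have "(\<lambda>x. 0) \<in> J" using ring_ideal_zero[OF J] .
  ultimately obtain k where "k \<in> I \<inter> J" "k \<noteq> (\<lambda>x. 0)" by blast
  then show ?thesis using that by blast
qed

lemma seq_submod_Nil: "seq_submod I [] = {\<lambda>x. 0}"
  unfolding seq_submod_def by auto

lemma seq_submod_singleton: "seq_submod I [a] = {(\<lambda>x. a x * n x) | n. n \<in> I}"
proof (intro equalityI subsetI)
  fix m assume "m \<in> seq_submod I [a]"
  then obtain ms where "m = (\<lambda>x. \<Sum>i<1. ([a] ! i) x * (ms ! i) x)"
    and "length ms = 1" and "set ms \<subseteq> I" unfolding seq_submod_def by auto
  then obtain n where "m = (\<lambda>x. a x * n x)" "n \<in> I" by (auto simp: length_Suc_conv)
  then show "m \<in> {(\<lambda>x. a x * n x) | n. n \<in> I}" by blast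
next
  fix m assume "m \<in> {(\<lambda>x. a x * n x) | n. n \<in> I}"
  then obtain n where "m = (\<lambda>x. a x * n x)" "n \<in> I" by blast
  then have "m = (\<lambda>x. \<Sum>i<length [a]. ([a] ! i) x * ([n] ! i) x)" "set [n] \<subseteq> I" by simp_all
  then show "m \<in> seq_submod I [a]" unfolding seq_submod_def by fastforce
qed

lemma seq_submod_subset:
  assumes I: "ring_ideal R I" and as: "set as \<subseteq> R"
  shows "seq_submod I as \<subseteq> I"
proof
  fix h assume "h \<in> seq_submod I as"
  then obtain ms where h: "h = (\<lambda>x. \<Sum>i<length as. (as ! i) x * (ms ! i) x)"
    and len: "length ms = length as" and ms: "set ms \<subseteq> I" unfolding seq_submod_def by auto
  have "\<forall>i<length as. (\<lambda>x. (as ! i) x * (ms ! i) x) \<in> I"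
  proof (intro allI impI)
    fix i assume "i < length as"
    then have "as ! i \<in> R" "ms ! i \<in> I" using nth_mem[of i as] nth_mem[of i ms] as ms len by auto
    then show "(\<lambda>x. (as ! i) x * (ms ! i) x) \<in> I" by (rule ring_ideal_mult[OF I])
  qed
  then show "h \<in> I" unfolding h by (rule ring_ideal_sum[OF I])
qed

lemma seq_submod_Cons:
  assumes I: "ring_ideal R I" and n: "n \<in> I"
  shows "(\<lambda>x. a x * n x) \<in> seq_submod I (a # as)"
proof -
  have zero: "(\<lambda>x. 0) \<in> I" using ring_ideal_zero[OF I] .
  let ?ms = "n # replicate (length as) (\<lambda>x. 0::real)"
  have "(\<lambda>x. a x * n x) = (\<lambda>x. \<Sum>i<length (a # as). ((a # as) ! i) x * (?ms ! i) x)"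
    unfolding length_Cons sum.lessThan_Suc_shift by simp
  moreover have "length ?ms = length (a # as)" "set ?ms \<subseteq> I" using n zero by auto
  ultimately show ?thesis unfolding seq_submod_def mem_Collect_eq
    by (intro exI[of _ ?ms] conjI)
qed

lemma depth_zero_iff:
  assumes I: "ring_ideal R I"
  shows "depth_zero R I \<longleftrightarrow>
    (\<forall>a\<in>R. module_regular I {\<lambda>x. 0} a \<longrightarrow> (\<forall>m\<in>I. \<exists>n\<in>I. m = (\<lambda>x. a x * n x)))"
proof
  assume dz: "depth_zero R I"
  show "\<forall>a\<in>R. module_regular I {\<lambda>x. 0} a \<longrightarrow> (\<forall>m\<in>I. \<exists>n\<in>I. m = (\<lambda>x. a x * n x))"
  proof (intro ballI impI, rule ccontr)
    fix a m assume "a \<in> R" "module_regular I {\<lambda>x. 0} a" "m \<in> I"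
      and "\<not> (\<exists>n\<in>I. m = (\<lambda>x. a x * n x))"
    then have "regular_seq R I [a]"
      unfolding regular_seq_def by (auto simp: seq_submod_Nil seq_submod_singleton)
    with dz show False unfolding depth_zero_def by blast
  qed
next
  assume surj: "\<forall>a\<in>R. module_regular I {\<lambda>x. 0} a \<longrightarrow> (\<forall>m\<in>I. \<exists>n\<in>I. m = (\<lambda>x. a x * n x))"
  show "depth_zero R I" unfolding depth_zero_def
  proof (intro allI impI, rule ccontr)
    fix as assume rs: "regular_seq R I as" and "as \<noteq> []"
    then obtain a as' where as: "as = a # as'" by (cases as) auto
    from rs have R: "set as \<subseteq> R" and ne: "seq_submod I as \<noteq> I"
      and "module_regular I {\<lambda>x. 0} a"
      unfolding regular_seq_def as by (auto simp: seq_submod_Nil)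
    with surj have "I \<subseteq> seq_submod I as"
      using seq_submod_Cons[OF I] unfolding as by fastforce
    with seq_submod_subset[OF I R] ne show False by blast
  qed
qed

lemma von_Neumann_regular_divides_ideal:
  assumes I: "ring_ideal R I" and g: "g \<in> R" and aga: "\<forall>x. a x = a x * g x * a x"
    and a: "a \<in> R" and reg: "module_regular I {\<lambda>x. 0} a" and m: "m \<in> I"
  shows "\<exists>n\<in>I. m = (\<lambda>x. a x * n x)"
proof
  show gm: "(\<lambda>x. g x * m x) \<in> I" using ring_ideal_mult[OF I g m] .
  have "(\<lambda>x. m x + - (a x * (g x * m x))) \<in> I"
    using ring_ideal_add[OF I m ring_ideal_uminus[OF I ring_ideal_mult[OF I a gm]]] .
  moreover have "(\<lambda>x. a x * (m x + - (a x * (g x * m x)))) = (\<lambda>x. 0)"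
  proof
    fix x
    have "a x * (a x * (g x * m x)) = (a x * g x * a x) * m x" by (simp add: mult_ac)
    also have "\<dots> = a x * m x" using aga by metis
    finally show "a x * (m x + - (a x * (g x * m x))) = 0" by (simp add: algebra_simps)
  qed
  ultimately have "(\<lambda>x. m x + - (a x * (g x * m x))) = (\<lambda>x. 0)"
    using reg unfolding module_regular_def by auto
  then show "m = (\<lambda>x. a x * (g x * m x))"
    by (metis add_eq_0_iff eq_neg_iff_add_eq_0 minus_minus)
qed

lemma module_regular_principal:
  "module_regular {(\<lambda>x. r x * f x) | r. r \<in> R} {\<lambda>x. 0} f"
  unfolding module_regular_def
proof (intro ballI impI notI)
  fix m assume "m \<in> {(\<lambda>x. r x * f x) | r. r \<in> R}" and m0: "m \<notin> {\<lambda>x. 0}"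
    and fm: "(\<lambda>x. f x * m x) \<in> {\<lambda>x. 0}"
  then obtain r where m: "m = (\<lambda>x. r x * f x)" by blast
  have "m x = 0" for x
  proof -
    have "f x * (r x * f x) = 0" using fm m by (simp add: fun_eq_iff)
    then show ?thesis using m by auto
  qed
  with m0 show False by auto
qed

lemma closed_ideal_Un: "closed_ideal X P \<Longrightarrow> A \<in> P \<Longrightarrow> B \<in> P \<Longrightarrow> A \<union> B \<in> P"
  unfolding closed_ideal_def by (elim conjE) (drule bspec, assumption, drule bspec, assumption)

lemma closed_ideal_closedin_subset:
  "closed_ideal X P \<Longrightarrow> A \<in> P \<Longrightarrow> closedin X B \<Longrightarrow> B \<subseteq> A \<Longrightarrow> B \<in> P"
  unfolding closed_ideal_def by (elim conjE) (drule bspec, assumption, drule spec, erule mp, rule conjI)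

lemma closed_ideal_empty:
  assumes "closed_ideal X P" shows "{} \<in> P"
proof -
  obtain A where "A \<in> P" using assms unfolding closed_ideal_def by auto
  then show ?thesis using closed_ideal_closedin_subset[OF assms] by simp
qed

lemma closed_ideal_closure_of_subset:
  assumes "closed_ideal X P" and "D \<subseteq> D'" and "X closure_of D' \<in> P"
  shows "X closure_of D \<in> P"
  using closed_ideal_closedin_subset[OF assms(1,3) closedin_closure_of closure_of_mono[OF assms(2)]] .

lemma closed_ideal_closure_of_subset_Un:
  assumes P: "closed_ideal X P" and D: "D \<subseteq> D1 \<union> D2"
    and D1: "X closure_of D1 \<in> P" and D2: "X closure_of D2 \<in> P"
  shows "X closure_of D \<in> P"
proof (rule closed_ideal_closure_of_subset[OF P D])
  show "X closure_of (D1 \<union> D2) \<in> P"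
    unfolding closure_of_Un by (rule closed_ideal_Un[OF P D1 D2])
qed

lemma discont_mult: "discont X (\<lambda>x. f x * g x) \<subseteq> discont X f \<union> discont X g"
  unfolding discont_def by (auto intro: tendsto_mult)

lemma discont_add: "discont X (\<lambda>x. f x + g x) \<subseteq> discont X f \<union> discont X g"
  unfolding discont_def by (auto intro: tendsto_add)

lemma discont_uminus: "discont X (\<lambda>x. - f x) = discont X f"
  unfolding discont_def by (simp add: tendsto_minus_cancel_left)

lemma eventually_atin_topspace: "eventually (\<lambda>y. y \<in> topspace X) (atin X x)"
  by (cases "x \<in> topspace X") (auto simp: eventually_atin dest: openin_subset)

lemma discont_indicator_topspace: "discont X (indicator (topspace X)) = {}"
  unfolding discont_def
  by (auto intro!: tendsto_eventually eventually_mono[OF eventually_atin_topspace])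

lemma discont_inverse:
  assumes "\<forall>x\<in>topspace X. a x \<noteq> 0"
  shows "discont X (\<lambda>x. if x \<in> topspace X then inverse (a x) else 0) \<subseteq> discont X a"
proof
  let ?b = "\<lambda>x. if x \<in> topspace X then inverse (a x) else 0"
  fix x assume "x \<in> discont X ?b"
  then have x: "x \<in> topspace X" and b: "\<not> (?b \<longlongrightarrow> ?b x) (atin X x)"
    unfolding discont_def by auto
  show "x \<in> discont X a"
  proof (rule ccontr)
    assume "x \<notin> discont X a"
    then have "(a \<longlongrightarrow> a x) (atin X x)" using x by (simp add: discont_def)
    moreover have "a x \<noteq> 0" using x assms by simp
    ultimately have "((\<lambda>y. inverse (a y)) \<longlongrightarrow> inverse (a x)) (atin X x)"
      by (rule tendsto_inverse)
    moreover have "eventually (\<lambda>y. inverse (a y) = ?b y) (atin X x)"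
      by (rule eventually_mono[OF eventually_atin_topspace]) simp
    ultimately have "(?b \<longlongrightarrow> inverse (a x)) (atin X x)"
      by (rule Lim_transform_eventually)
    with b x show False by simp
  qed
qed

lemma CXP_outside: "f \<in> CXP X P \<Longrightarrow> x \<notin> topspace X \<Longrightarrow> f x = 0"
  unfolding CXP_def by auto

lemma CXP_zero: "closed_ideal X P \<Longrightarrow> (\<lambda>x. 0) \<in> CXP X P"
  unfolding CXP_def discont_def using closed_ideal_empty by auto

lemma CXP_indicator_topspace: "closed_ideal X P \<Longrightarrow> indicator (topspace X) \<in> CXP X P"
  unfolding CXP_def by (simp add: discont_indicator_topspace closed_ideal_empty)

lemma CXP_mult: "closed_ideal X P \<Longrightarrow> f \<in> CXP X P \<Longrightarrow> g \<in> CXP X P \<Longrightarrow> (\<lambda>x. f x * g x) \<in> CXP X P"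
  unfolding CXP_def using closed_ideal_closure_of_subset_Un[OF _ discont_mult] by auto

lemma CXP_add: "closed_ideal X P \<Longrightarrow> f \<in> CXP X P \<Longrightarrow> g \<in> CXP X P \<Longrightarrow> (\<lambda>x. f x + g x) \<in> CXP X P"
  unfolding CXP_def using closed_ideal_closure_of_subset_Un[OF _ discont_add] by auto

lemma CXP_uminus: "f \<in> CXP X P \<Longrightarrow> (\<lambda>x. - f x) \<in> CXP X P"
  unfolding CXP_def by (simp add: discont_uminus)

lemma CXP_inverse:
  assumes "closed_ideal X P" and "a \<in> CXP X P" and "\<forall>x\<in>topspace X. a x \<noteq> 0"
  shows "(\<lambda>x. if x \<in> topspace X then inverse (a x) else 0) \<in> CXP X P"
  using assms closed_ideal_closure_of_subset[OF _ discont_inverse]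
  unfolding CXP_def by auto

lemma indicator_topspace_mult_CXP:
  assumes "f \<in> CXP X P" shows "(\<lambda>x. indicator (topspace X) x * f x) = f"
proof
  fix x show "indicator (topspace X) x * f x = f x"
    using CXP_outside[OF assms, of x] by (cases "x \<in> topspace X") simp_all
qed

lemma ring_ideal_CXP: "closed_ideal X P \<Longrightarrow> ring_ideal (CXP X P) (CXP X P)"
  unfolding ring_ideal_def using CXP_zero CXP_add CXP_uminus CXP_mult by auto

lemma ring_ideal_principal:
  assumes P: "closed_ideal X P" and f: "f \<in> CXP X P"
  shows "ring_ideal (CXP X P) {(\<lambda>x. r x * f x) | r. r \<in> CXP X P}"
  unfolding ring_ideal_def
proof (intro conjI ballI)
  let ?R = "CXP X P" and ?I = "{(\<lambda>x. r x * f x) | r. r \<in> CXP X P}"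
  show "?I \<subseteq> ?R" using CXP_mult[OF P _ f] by auto
  show "(\<lambda>x. 0) \<in> ?I" using CXP_zero[OF P] by force
  fix g assume "g \<in> ?I"
  then obtain r where r: "r \<in> ?R" and g: "g = (\<lambda>x. r x * f x)" by blast
  show "(\<lambda>x. - g x) \<in> ?I"
    using CXP_uminus[OF r] g by (intro CollectI exI[of _ "\<lambda>x. - r x"]) auto
  show "(\<lambda>x. g x + h x) \<in> ?I" if "h \<in> ?I" for h
  proof -
    obtain s where s: "s \<in> ?R" and h: "h = (\<lambda>x. s x * f x)" using \<open>h \<in> ?I\<close> by blast
    show ?thesis using CXP_add[OF P r s] g h
      by (intro CollectI exI[of _ "\<lambda>x. r x + s x"]) (auto simp: algebra_simps)
  qed
  show "(\<lambda>x. q x * g x) \<in> ?I" if q: "q \<in> ?R" for q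
    using CXP_mult[OF P q r] g by (intro CollectI exI[of _ "\<lambda>x. q x * r x"]) (auto simp: algebra_simps)
qed

lemma principal_ideal_contains_generator:
  assumes "closed_ideal X P" and "f \<in> CXP X P"
  shows "f \<in> {(\<lambda>x. r x * f x) | r. r \<in> CXP X P}"
proof -
  have "f = (\<lambda>x. indicator (topspace X) x * f x)"
    using indicator_topspace_mult_CXP[OF assms(2)] by simp
  then show ?thesis using CXP_indicator_topspace[OF assms(1)] by blast
qed

lemma essential_ideal_carrier:
  assumes "closed_ideal X P" shows "essential_ideal (CXP X P) (CXP X P)"
  unfolding essential_ideal_def
proof (intro conjI allI impI)
  show "ring_ideal (CXP X P) (CXP X P)" using ring_ideal_CXP[OF assms] .
  fix J assume "ring_ideal (CXP X P) J \<and> J \<noteq> {\<lambda>x. 0}"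
  then have "J \<subseteq> CXP X P" "J \<noteq> {\<lambda>x. 0}" using ring_ideal_subset by auto
  then show "CXP X P \<inter> J \<noteq> {\<lambda>x. 0}" by (simp add: Int_absorb1)
qed

lemma nonvanishing_CXP_divides_ideal:
  assumes P: "closed_ideal X P" and I: "ring_ideal (CXP X P) I"
    and a: "a \<in> CXP X P" and nz: "\<forall>x\<in>topspace X. a x \<noteq> 0" and m: "m \<in> I"
  shows "\<exists>n\<in>I. m = (\<lambda>x. a x * n x)"
proof
  let ?b = "\<lambda>x. if x \<in> topspace X then inverse (a x) else 0"
  show "(\<lambda>x. ?b x * m x) \<in> I"
    using ring_ideal_mult[OF I CXP_inverse[OF P a nz] m] .
  have "m \<in> CXP X P" using ring_ideal_subset[OF I] m by blast
  then show "m = (\<lambda>x. a x * (?b x * m x))"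
    using nz by (auto simp: CXP_outside)
qed

lemma openin_XP_coz: "f \<in> CXP X P \<Longrightarrow> openin (XP X P) (coz X f)"
  unfolding XP_def openin_topology_generated_by_iff by (blast intro: generate_topology_on.Basis)

lemma openin_XP_imp_coz:
  assumes P: "closed_ideal X P" and U: "openin (XP X P) U" and y: "y \<in> U"
  shows "\<exists>h\<in>CXP X P. y \<in> coz X h \<and> coz X h \<subseteq> U"
proof -
  have "generate_topology_on {coz X f | f. f \<in> CXP X P} U"
    using U unfolding XP_def openin_topology_generated_by_iff .
  then show ?thesis using y
  proof (induction arbitrary: y rule: generate_topology_on.induct)
    case (Int U V)
    then obtain g h where g: "g \<in> CXP X P" "y \<in> coz X g" "coz X g \<subseteq> U"
      and h: "h \<in> CXP X P" "y \<in> coz X h" "coz X h \<subseteq> V" by (meson IntE)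
    have "coz X (\<lambda>x. g x * h x) = coz X g \<inter> coz X h" unfolding coz_def ZP_def by auto
    then show ?case using g h CXP_mult[OF P g(1) h(1)] by (intro bexI[of _ "\<lambda>x. g x * h x"]) auto
  qed blast+
qed

lemma almost_PP_space_regular_nonvanishing:
  assumes P: "closed_ideal X P" and apl: "almost_PP_space X P"
    and I: "essential_ideal (CXP X P) I" and a: "a \<in> CXP X P"
    and reg: "module_regular I {\<lambda>x. 0} a"
  shows "\<forall>x\<in>topspace X. a x \<noteq> 0"
proof (rule ccontr)
  let ?R = "CXP X P"
  assume "\<not> (\<forall>x\<in>topspace X. a x \<noteq> 0)"
  then have "ZP X a \<noteq> {}" unfolding ZP_def by auto
  then obtain y where "y \<in> XP X P interior_of ZP X a"
    using apl a unfolding almost_PP_space_def by blast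
  with openin_XP_imp_coz[OF P openin_interior_of] obtain h
    where h: "h \<in> ?R" "y \<in> coz X h" "coz X h \<subseteq> XP X P interior_of ZP X a" by blast
  let ?J = "{(\<lambda>x. r x * h x) | r. r \<in> ?R}"
  have "h \<noteq> (\<lambda>x. 0)" using h(2) unfolding coz_def ZP_def by auto
  then obtain k where k: "k \<in> I" "k \<in> ?J" "k \<noteq> (\<lambda>x. 0)"
    using essential_ideal_meets[OF I ring_ideal_principal[OF P h(1)]
        principal_ideal_contains_generator[OF P h(1)]] by blast
  then obtain r where kr: "k = (\<lambda>x. r x * h x)" by blast
  have hz: "coz X h \<subseteq> ZP X a" using h(3) interior_of_subset by (rule subset_trans)
  have "a x * k x = 0" for x
  proof (cases "h x = 0")
    case False
    then have "x \<in> coz X h" using CXP_outside[OF h(1)] unfolding coz_def ZP_def by blast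
    then have "a x = 0" using hz unfolding ZP_def by blast
    then show ?thesis by simp
  qed (simp add: kr)
  then have "(\<lambda>x. a x * k x) \<in> {\<lambda>x. 0}" by (simp add: fun_eq_iff)
  with reg k show False unfolding module_regular_def by blast
qed

lemma depth_zero_imp_PP_space:
  assumes P: "closed_ideal X P" and dz: "\<forall>I. ring_ideal (CXP X P) I \<longrightarrow> depth_zero (CXP X P) I"
  shows "PP_space X P"
  unfolding PP_space_def
proof
  let ?R = "CXP X P"
  fix f assume f: "f \<in> ?R"
  let ?I = "{(\<lambda>x. r x * f x) | r. r \<in> ?R}"
  have I: "ring_ideal ?R ?I" using ring_ideal_principal[OF P f] .
  then have "depth_zero ?R ?I" using dz by blast
  then obtain n where "n \<in> ?I" and fn: "f = (\<lambda>x. f x * n x)"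
    using f module_regular_principal principal_ideal_contains_generator[OF P f]
    unfolding depth_zero_iff[OF I] by blast
  then obtain r where r: "r \<in> ?R" and "n = (\<lambda>x. r x * f x)" by blast
  with fn have "\<forall>x. f x = f x * r x * f x" by (simp add: fun_eq_iff mult.assoc)
  with r show "\<exists>g\<in>?R. \<forall>x. f x = f x * g x * f x" by blast
qed

lemma PP_space_imp_depth_zero:
  assumes pp: "PP_space X P" and I: "ring_ideal (CXP X P) I"
  shows "depth_zero (CXP X P) I"
  unfolding depth_zero_iff[OF I]
proof (intro ballI impI)
  fix a m assume a: "a \<in> CXP X P" and reg: "module_regular I {\<lambda>x. 0} a" and m: "m \<in> I"
  obtain g where "g \<in> CXP X P" "\<forall>x. a x = a x * g x * a x"
    using pp a unfolding PP_space_def by blast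
  from von_Neumann_regular_divides_ideal[OF I this a reg m]
  show "\<exists>n\<in>I. m = (\<lambda>x. a x * n x)" .
qed

lemma depth_zero_essential_imp_almost_PP_space:
  assumes P: "closed_ideal X P"
    and dz: "\<forall>I. essential_ideal (CXP X P) I \<longrightarrow> depth_zero (CXP X P) I"
  shows "almost_PP_space X P"
  unfolding almost_PP_space_def
proof (intro ballI impI notI)
  let ?R = "CXP X P"
  fix f assume f: "f \<in> ?R" and "ZP X f \<noteq> {}" and int: "XP X P interior_of ZP X f = {}"
  then obtain x0 where x0: "x0 \<in> ZP X f" by blast
  have "module_regular ?R {\<lambda>x. 0} f" unfolding module_regular_def
  proof (intro ballI impI notI)
    fix m assume m: "m \<in> ?R" and m0: "m \<notin> {\<lambda>x. 0}" and "(\<lambda>x. f x * m x) \<in> {\<lambda>x. 0}"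
    then have "\<forall>x. f x * m x = 0" by (simp add: fun_eq_iff)
    then have "coz X m \<subseteq> ZP X f" unfolding coz_def ZP_def by auto
    then have "coz X m \<subseteq> XP X P interior_of ZP X f"
      using openin_XP_coz[OF m] by (rule interior_of_maximal)
    then have "m = (\<lambda>x. 0)" using int CXP_outside[OF m] unfolding coz_def ZP_def by auto
    with m0 show False by simp
  qed
  moreover have "depth_zero ?R ?R" using dz essential_ideal_carrier[OF P] by blast
  ultimately obtain n where "indicator (topspace X) = (\<lambda>x. f x * n x)"
    using CXP_indicator_topspace[OF P] f unfolding depth_zero_iff[OF ring_ideal_CXP[OF P]] by blast
  then have "indicator (topspace X) x0 = f x0 * n x0" by (simp add: fun_eq_iff)
  with x0 show False unfolding ZP_def by simp
qed

lemma almost_PP_space_imp_depth_zero_essential: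
  assumes P: "closed_ideal X P" and apl: "almost_PP_space X P"
    and I: "essential_ideal (CXP X P) I"
  shows "depth_zero (CXP X P) I"
proof -
  have "ring_ideal (CXP X P) I" using I by (simp add: essential_ideal_def)
  then show ?thesis unfolding depth_zero_iff[OF \<open>ring_ideal (CXP X P) I\<close>]
    using nonvanishing_CXP_divides_ideal[OF P] almost_PP_space_regular_nonvanishing[OF P apl I] by blast
qed

theorem theorem4p5:
  fixes X :: "'a topology" and P :: "'a set set"
  assumes "t1_space X" and "closed_ideal X P"
  shows "((\<forall>I. ring_ideal (CXP X P) I \<longrightarrow> depth_zero (CXP X P) I) \<longleftrightarrow> PP_space X P)
       \<and> ((\<forall>I. essential_ideal (CXP X P) I \<longrightarrow> depth_zero (CXP X P) I) \<longleftrightarrow> almost_PP_space X P)"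
proof
  show "(\<forall>I. ring_ideal (CXP X P) I \<longrightarrow> depth_zero (CXP X P) I) \<longleftrightarrow> PP_space X P"
    using depth_zero_imp_PP_space[OF \<open>closed_ideal X P\<close>] PP_space_imp_depth_zero by blast
  show "(\<forall>I. essential_ideal (CXP X P) I \<longrightarrow> depth_zero (CXP X P) I) \<longleftrightarrow> almost_PP_space X P"
    using depth_zero_essential_imp_almost_PP_space[OF \<open>closed_ideal X P\<close>]
      almost_PP_space_imp_depth_zero_essential[OF \<open>closed_ideal X P\<close>] by blast
qed

end
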